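(* In the fixed-design setting of the context, let $P$ be the orthogonal projection of $\mathcal H$ onto $\mathcal H_m$. Then for every $\lambda>0$, \[ \mathbb E\big[\widehat{\mathcal E}_\lambda(Pf_{\lambda,\gamma})\big]\le \frac{2}{n\lambda}\operatorname{tr}\!\big(K-\widetilde K\big)\,\mathbb E\big[\widehat{\mathcal E}_\lambda(f_{\lambda,\gamma})\big]+2\,\mathbb E\big[\widehat{\mathcal E}_\lambda(f_{\lambda,\gamma})\big]. \]
   Context: Let $\mathcal X$ be a set and $k_\gamma$ a positive definite kernel on $\mathcal X$ with RKHS $\mathcal H$. Fixed points $x_1,\dots,x_n\in\mathcal X$, $f^*:\mathcal X\to\mathbb R$, labels $y_i=f^*(x_i)+\epsilon_i$ with $\epsilon_i$ i.i.d. real, $\mathbb E[\epsilon_i]=0$, $\mathbb E[\epsilon_i^2]=\sigma^2$; $Y=(y_i)_i$, $f(X)=(f(x_i))_i$. Fixed inducing points $z_1,\dots,z_m$. $K_{ij}=k_\gamma(x_i,x_j)$, $(K_{nm})_{ij}=k_\gamma(x_i,z_j)$, $(K_{mm})_{ij}=k_\gamma(z_i,z_j)$, $\widetilde K=K_{nm}K_{mm}^\dagger K_{nm}^\top$ ($\dagger$ = Moore–Penrose pseudo-inverse). $\widehat{\mathcal E}_\lambda(f)=\frac1n\|f(X)-Y\|^2+\lambda\|f\|_{\mathcal H}^2$. $\mathcal H_m=\operatorname{span}\{k_\gamma(z_j,\cdot)\}_{j=1}^m$. The noise-less KRR estimator is $f_{\lambda,\gamma}=\arg\min_{f\in\mathcal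 H}\frac1n\|f(X)-f^*(X)\|^2+\lambda\|f\|_{\mathcal H}^2$ (deterministic). Expectation is over the noise. *)

theory Defs
  imports "HOL-Analysis.Analysis" "HOL-Probability.Probability"
begin

definition mat_trace :: "real^'n^'n \<Rightarrow> real" where
  "mat_trace A = (\<Sum>i\<in>UNIV. A $ i $ i)"

definition is_mp_pinv :: "real^'m^'n \<Rightarrow> real^'n^'m \<Rightarrow> bool" where
  "is_mp_pinv A B \<longleftrightarrow> A ** B ** A = A \<and> B ** A ** B = B \<and>
     transpose (A ** B) = A ** B \<and> transpose (B ** A) = B ** A"

definition mp_pinv :: "real^'m^'n \<Rightarrow> real^'n^'m" where
  "mp_pinv A = (THE B. is_mp_pinv A B)"

definition orth_proj :: "'h::real_inner set \<Rightarrow> 'h \<Rightarrow> 'h" where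
  "orth_proj S h = (THE p. p \<in> S \<and> (\<forall>s\<in>S. inner (h - p) s = 0))"

definition kmat_nn :: "('a \<Rightarrow> 'a \<Rightarrow> real) \<Rightarrow> ('n::finite \<Rightarrow> 'a) \<Rightarrow> real^'n^'n" where
  "kmat_nn k x = (\<chi> i j. k (x i) (x j))"

definition kmat_nm :: "('a \<Rightarrow> 'a \<Rightarrow> real) \<Rightarrow> ('n::finite \<Rightarrow> 'a) \<Rightarrow> ('m::finite \<Rightarrow> 'a) \<Rightarrow> real^'m^'n" where
  "kmat_nm k x z = (\<chi> i j. k (x i) (z j))"

definition kmat_tilde :: "('a \<Rightarrow> 'a \<Rightarrow> real) \<Rightarrow> ('n::finite \<Rightarrow> 'a) \<Rightarrow> ('m::finite \<Rightarrow> 'a) \<Rightarrow> real^'n^'n" where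
  "kmat_tilde k x z = kmat_nm k x z ** mp_pinv (kmat_nn k z) ** transpose (kmat_nm k x z)"

text \<open>Regularized empirical risk of the RKHS element represented by h (the function
  u \<mapsto> inner h (phi u), with RKHS norm norm h), for label vector Y.\<close>
definition emp_risk :: "real \<Rightarrow> ('a \<Rightarrow> 'h::real_inner) \<Rightarrow> ('n::finite \<Rightarrow> 'a) \<Rightarrow> ('n \<Rightarrow> real) \<Rightarrow> 'h \<Rightarrow> real" where
  "emp_risk lam phi x Y h =
     (1 / real CARD('n)) * (\<Sum>i\<in>UNIV. (inner h (phi (x i)) - Y i)\<^sup>2) + lam * (norm h)\<^sup>2"

end

theory Submission
  imports Defs
begin

text \<open>For any \<open>f\<close> and any labels, the residual of \<open>P f\<close> at \<open>x\<^sub>i\<close> differs from that of \<open>f\<close> by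
  \<open>\<langle>f, (I - P) \<phi>(x\<^sub>i)\<rangle>\<close>, which Cauchy--Schwarz bounds by \<open>\<parallel>f\<parallel> \<parallel>(I - P) \<phi>(x\<^sub>i)\<parallel>\<close>.
  Expressing \<open>P\<close> through the pseudo-inverse of the Gram matrix \<open>K\<^sub>m\<^sub>m\<close> gives
  \<open>K\<^sup>~\<^sub>i\<^sub>i = \<langle>\<phi>(x\<^sub>i), P \<phi>(x\<^sub>i)\<rangle>\<close>, so these squared norms sum to \<open>tr (K - K\<^sup>~)\<close>.
  Together with \<open>(a - b)\<^sup>2 \<le> 2a\<^sup>2 + 2b\<^sup>2\<close>, \<open>\<parallel>P f\<parallel> \<le> \<parallel>f\<parallel>\<close> and \<open>\<lambda>\<parallel>f\<parallel>\<^sup>2 \<le> \<E>\<^sub>\<lambda>(f)\<close> this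
  yields the inequality for every realisation of the noise, and it is then integrated.\<close>

section \<open>Moore--Penrose pseudo-inverse of a symmetric matrix\<close>

lemma matrix_diff_ldistrib: "(A::real^'n^'m) ** (B - C) = A ** B - A ** C"
  by (simp add: matrix_matrix_mult_def vec_eq_iff sum_subtractf right_diff_distrib)

lemma matrix_diff_rdistrib: "((A::real^'n^'m) - B) ** C = A ** C - B ** C"
  by (simp add: matrix_matrix_mult_def vec_eq_iff sum_subtractf left_diff_distrib)

lemma matrix_add_rdistrib: "((A::real^'n^'m) + B) ** C = A ** C + B ** C"
  by (simp add: matrix_matrix_mult_def vec_eq_iff sum.distrib distrib_right)

lemma inner_matrix_vector_symmetric:
  fixes A :: "real^'m^'m"
  assumes "transpose A = A"
  shows "inner (A *v v) w = inner v (A *v w)"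
  by (metis assms dot_lmul_matrix transpose_matrix_vector)

lemma is_mp_pinv_unique:
  fixes A :: "real^'m^'n"
  assumes "is_mp_pinv A B1" "is_mp_pinv A B2"
  shows "B1 = B2"
proof -
  have a1: "A ** B1 ** A = A" "B1 ** A ** B1 = B1" "transpose (A ** B1) = A ** B1"
      "transpose (B1 ** A) = B1 ** A"
    using assms(1) unfolding is_mp_pinv_def by auto
  have a2: "A ** B2 ** A = A" "B2 ** A ** B2 = B2" "transpose (A ** B2) = A ** B2"
      "transpose (B2 ** A) = B2 ** A"
    using assms(2) unfolding is_mp_pinv_def by auto
  have "B1 = B1 ** (A ** B1)" using a1(2) by (simp add: matrix_mul_assoc)
  also have "\<dots> = B1 ** transpose B1 ** transpose A"
    by (metis a1(3) matrix_transpose_mul matrix_mul_assoc)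
  also have "\<dots> = B1 ** transpose B1 ** (transpose A ** transpose B2 ** transpose A)"
    by (metis a2(1) matrix_transpose_mul matrix_mul_assoc)
  also have "\<dots> = B1 ** transpose (A ** B1) ** transpose (A ** B2)"
    by (simp add: matrix_transpose_mul matrix_mul_assoc)
  also have "\<dots> = B1 ** A ** B2"
    using a1 a2 by (simp add: matrix_mul_assoc)
  finally have B1: "B1 = B1 ** A ** B2" .
  have "B2 = (B2 ** A) ** B2" using a2(2) by simp
  also have "\<dots> = transpose A ** transpose B2 ** B2"
    by (metis a2(4) matrix_transpose_mul)
  also have "\<dots> = (transpose A ** transpose B1 ** transpose A) ** transpose B2 ** B2"
    by (metis a1(1) matrix_transpose_mul matrix_mul_assoc)
  also have "\<dots> = transpose (B1 ** A) ** transpose (B2 ** A) ** B2"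
    by (simp add: matrix_transpose_mul matrix_mul_assoc)
  also have "\<dots> = B1 ** A ** B2"
    using a1 a2 by (metis matrix_mul_assoc)
  finally show ?thesis using B1 by simp
qed

lemma is_mp_pinv_from_range_projection:
  fixes A Pm Li :: "real^'m^'m"
  assumes AP: "A ** Pm = A" and PA: "Pm ** A = A" and PP: "Pm ** Pm = Pm"
    and sym: "transpose Pm = Pm"
    and inv_left: "Li ** (A + mat 1 - Pm) = mat 1" and inv_right: "(A + mat 1 - Pm) ** Li = mat 1"
  shows "is_mp_pinv A (Li - (mat 1 - Pm))"
proof -
  define L where "L = A + mat 1 - Pm"
  have LP: "L ** Pm = A" unfolding L_def using AP PP by (simp add: matrix_diff_rdistrib matrix_add_rdistrib)
  have PL: "Pm ** L = A" unfolding L_def using PA PP by (simp add: matrix_diff_ldistrib matrix_add_ldistrib)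
  have QL: "(mat 1 - Pm) ** L = mat 1 - Pm" using PL by (simp add: matrix_diff_rdistrib L_def)
  have LiA: "Li ** A = Pm"
    by (metis LP inv_left L_def matrix_mul_assoc matrix_mul_lid)
  have ALi: "A ** Li = Pm"
    by (metis PL inv_right L_def matrix_mul_assoc matrix_mul_rid)
  have QLi: "(mat 1 - Pm) ** Li = mat 1 - Pm"
    by (metis QL inv_right L_def matrix_mul_assoc matrix_mul_rid)
  define B where "B = Li - (mat 1 - Pm)"
  have AB: "A ** B = Pm" unfolding B_def using ALi AP by (simp add: matrix_diff_ldistrib)
  have BA: "B ** A = Pm" unfolding B_def using LiA PA by (simp add: matrix_diff_rdistrib)
  have "B = (mat 1 - (mat 1 - Pm)) ** Li"
    unfolding B_def by (subst QLi[symmetric]) (simp add: matrix_diff_rdistrib)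
  then have B: "B = Pm ** Li" by simp
  have "A ** B ** A = A" using AB PA by simp
  moreover have "B ** A ** B = B" using BA B PP by (simp add: matrix_mul_assoc)
  ultimately show ?thesis unfolding is_mp_pinv_def B_def[symmetric] using AB BA sym by simp
qed

lemma subspace_projection_matrix:
  fixes R :: "(real^'m) set"
  assumes "subspace R"
  obtains Pm :: "real^'m^'m"
  where "transpose Pm = Pm" "\<And>y. Pm *v y \<in> R" "\<And>r. r \<in> R \<Longrightarrow> Pm *v r = r"
proof -
  obtain U where U: "U \<subseteq> R" "pairwise orthogonal U" "\<And>x. x \<in> U \<Longrightarrow> norm x = 1"
     "independent U" "span U = R"
    using orthonormal_basis_subspace[OF assms] by metis
  have finU: "finite U" using U(4) by (rule independent_imp_finite)
  define Pm :: "real^'m^'m" where "Pm = (\<chi> i j. \<Sum>u\<in>U. u$i * u$j)"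
  have Pm_apply: "Pm *v y = (\<Sum>u\<in>U. inner u y *\<^sub>R u)" for y
    unfolding Pm_def
    by (simp add: vec_eq_iff matrix_vector_mult_def inner_vec_def sum_distrib_left
        sum_distrib_right sum_component mult.commute mult.left_commute; intro allI; rule sum.swap)
  have "transpose Pm = Pm" unfolding Pm_def transpose_def by (simp add: vec_eq_iff mult.commute)
  moreover have "Pm *v y \<in> R" for y
    unfolding Pm_apply using U(1) assms by (intro subspace_sum subspace_mul) auto
  moreover have "Pm *v r = r" if "r \<in> R" for r
  proof -
    have basis: "Pm *v u = u" if "u \<in> U" for u
    proof -
      have "inner u' u = (if u' = u then 1 else 0)" if "u' \<in> U" for u'
        using U(2,3) \<open>u \<in> U\<close> that by (auto simp: pairwise_def orthogonal_def norm_eq_1)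
      then have "Pm *v u = (\<Sum>u'\<in>U. if u' = u then u' else 0)"
        unfolding Pm_apply by (intro sum.cong) auto
      then show ?thesis using finU that by (simp add: sum.delta')
    qed
    have "r \<in> span U" using that U(5) by simp
    then show ?thesis
      by (induction rule: span_induct_alt)
        (simp_all add: basis matrix_vector_right_distrib matrix_vector_mult_scaleR)
  qed
  ultimately show ?thesis using that by blast
qed

lemma is_mp_pinv_mp_pinv_symmetric:
  fixes A :: "real^'m^'m"
  assumes sym: "transpose A = A"
  shows "is_mp_pinv A (mp_pinv A)"
proof -
  define R where "R = range (\<lambda>v. A *v v)"
  have "subspace R" unfolding R_def
    by (metis matrix_vector_mul_linear linear_subspace_image subspace_UNIV)
  then obtain Pm :: "real^'m^'m" where
    P_sym: "transpose Pm = Pm" and P_into: "\<And>y. Pm *v y \<in> R" and P_id: "\<And>r. r \<in> R \<Longrightarrow> Pm *v r = r"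
    using subspace_projection_matrix by blast
  have PA: "Pm ** A = A"
    by (subst matrix_eq) (auto simp: matrix_vector_mul_assoc[symmetric] R_def intro!: P_id)
  have AP: "A ** Pm = A"
    using PA sym P_sym by (metis matrix_transpose_mul transpose_transpose)
  have PP: "Pm ** Pm = Pm"
    by (subst matrix_eq) (auto simp: matrix_vector_mul_assoc[symmetric] intro!: P_id P_into)
  have ker: "y = 0" if "(A + mat 1 - Pm) *v y = 0" for y
  proof -
    define a where "a = A *v y"
    define q where "q = y - Pm *v y"
    have "inner q a = 0"
      using inner_matrix_vector_symmetric[OF P_sym, of y a] P_id[of a]
      by (simp add: q_def a_def R_def inner_diff_left)
    moreover have "a + q = 0" using that unfolding a_def q_def
      by (simp add: matrix_vector_mult_add_rdistrib matrix_vector_mult_diff_rdistrib algebra_simps)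
    ultimately have a0: "a = 0" and "q = 0"
      by (metis add.commute add.right_neutral add_diff_cancel_left' diff_0 inner_eq_zero_iff inner_minus_left)+
    then obtain w where "y = A *v w" using P_into[of y] unfolding q_def R_def by auto
    then have "inner y y = 0"
      using inner_matrix_vector_symmetric[OF sym, of w y] a0 by (simp add: a_def)
    then show ?thesis by simp
  qed
  obtain Li where Li: "Li ** (A + mat 1 - Pm) = mat 1"
    using ker matrix_left_invertible_ker by blast
  then have "(A + mat 1 - Pm) ** Li = mat 1" using matrix_left_right_inverse by blast
  then have pinv: "is_mp_pinv A (Li - (mat 1 - Pm))"
    by (rule is_mp_pinv_from_range_projection[OF AP PA PP P_sym Li])
  then show ?thesis
    unfolding mp_pinv_def by (rule theI) (use pinv is_mp_pinv_unique in blast)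
qed

section \<open>Orthogonal projection onto a finite span via the Gram matrix\<close>

definition inner_prods :: "('m::finite \<Rightarrow> 'h::real_inner) \<Rightarrow> 'h \<Rightarrow> real^'m" where
  "inner_prods psi h = (\<chi> j. inner (psi j) h)"

definition lin_comb :: "('m::finite \<Rightarrow> 'h::real_inner) \<Rightarrow> real^'m \<Rightarrow> 'h" where
  "lin_comb psi c = (\<Sum>j\<in>UNIV. c$j *\<^sub>R psi j)"

definition gram :: "('m::finite \<Rightarrow> 'h::real_inner) \<Rightarrow> real^'m^'m" where
  "gram psi = (\<chi> j l. inner (psi j) (psi l))"

lemma inner_lin_comb: "inner (lin_comb psi c) h = inner c (inner_prods psi h)"
  by (simp add: lin_comb_def inner_prods_def inner_sum_left inner_vec_def)

lemma inner_prods_lin_comb: "inner_prods psi (lin_comb psi c) = gram psi *v c"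
  by (simp add: gram_def lin_comb_def inner_prods_def vec_eq_iff matrix_vector_mult_def
      inner_sum_right mult.commute)

lemma transpose_gram: "transpose (gram psi) = gram psi"
  by (simp add: gram_def transpose_def vec_eq_iff inner_commute)

text \<open>The vector \<open>d = b - A B b\<close> is orthogonal to the range of \<open>A\<close> (as \<open>A B\<close> is symmetric and
  \<open>A B A = A\<close>), hence \<open>A d = 0\<close>, i.e.\ \<open>\<Sum>\<^sub>j d\<^sub>j \<psi>\<^sub>j = 0\<close>; this makes \<open>d\<close> orthogonal to \<open>b\<close> as well.\<close>

lemma gram_pinv_inner_prods:
  assumes "is_mp_pinv (gram psi) B"
  shows "gram psi *v (B *v inner_prods psi h) = inner_prods psi h"
proof -
  define A where "A = gram psi"
  have sym: "transpose A = A" unfolding A_def by (rule transpose_gram)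
  have ABA: "A ** B ** A = A" and AB_sym: "transpose (A ** B) = A ** B"
    using assms unfolding is_mp_pinv_def A_def by auto
  define b where "b = inner_prods psi h"
  define d where "d = b - A *v (B *v b)"
  have perp: "inner d (A *v v) = 0" for v
  proof -
    have "inner (A *v (B *v b)) (A *v v) = inner b ((A ** B) *v (A *v v))"
      using inner_matrix_vector_symmetric[OF AB_sym] by (simp add: matrix_vector_mul_assoc)
    also have "\<dots> = inner b (A *v v)" using ABA by (simp add: matrix_vector_mul_assoc)
    finally show ?thesis unfolding d_def by (simp add: inner_diff_left)
  qed
  have Ad: "A *v d = 0"
    using perp[of "A *v d"] inner_matrix_vector_symmetric[OF sym, of d "A *v d"] by simp
  then have "lin_comb psi d = 0"
    using inner_lin_comb[of psi d "lin_comb psi d"] by (simp add: inner_prods_lin_comb A_def)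
  then have "inner d b = 0" using inner_lin_comb[of psi d h] by (simp add: b_def)
  moreover have "inner d (A *v (B *v b)) = 0"
    using inner_matrix_vector_symmetric[OF sym, of d "B *v b"] Ad by simp
  ultimately have "inner d d = 0" by (simp add: d_def inner_diff_right)
  then show ?thesis by (simp add: d_def b_def A_def)
qed

lemma orth_proj_eqI:
  fixes S :: "'h::real_inner set"
  assumes "subspace S" "p \<in> S" "\<And>s. s \<in> S \<Longrightarrow> inner (h - p) s = 0"
  shows "orth_proj S h = p"
  unfolding orth_proj_def
proof (rule the_equality)
  show "p \<in> S \<and> (\<forall>s\<in>S. inner (h - p) s = 0)" using assms by auto
next
  fix p' assume p': "p' \<in> S \<and> (\<forall>s\<in>S. inner (h - p') s = 0)"
  have "p - p' \<in> S" using assms(1,2) p' by (simp add: subspace_diff)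
  then have "inner (h - p') (p - p') = 0" "inner (h - p) (p - p') = 0" using p' assms(3) by auto
  moreover have "p - p' = (h - p') - (h - p)" by simp
  ultimately have "inner (p - p') (p - p') = 0" by (simp only: inner_diff_left)
  then show "p' = p" by simp
qed

lemma lin_comb_gram_pinv_orth_proj:
  fixes psi :: "'m::finite \<Rightarrow> 'h::real_inner" and h :: 'h
  assumes "is_mp_pinv (gram psi) B"
  defines "p \<equiv> lin_comb psi (B *v inner_prods psi h)"
  shows "p \<in> span (range psi)" and "\<And>s. s \<in> span (range psi) \<Longrightarrow> inner (h - p) s = 0"
proof -
  show "p \<in> span (range psi)" unfolding p_def lin_comb_def
    by (intro span_sum span_mul span_base) auto
  have "inner_prods psi p = inner_prods psi h"
    unfolding p_def inner_prods_lin_comb by (rule gram_pinv_inner_prods[OF assms(1)])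
  then have "inner (psi j) p = inner (psi j) h" for j by (simp add: inner_prods_def vec_eq_iff)
  then have "inner (h - p) (psi j) = 0" for j by (metis inner_commute inner_diff_right diff_self)
  then show "inner (h - p) s = 0" if "s \<in> span (range psi)" for s
    using orthogonal_to_span[OF that, of "h - p"] by (auto simp: orthogonal_def)
qed

lemma orth_proj_span_gram:
  fixes psi :: "'m::finite \<Rightarrow> 'h::real_inner"
  assumes "is_mp_pinv (gram psi) B"
  shows "orth_proj (span (range psi)) h = lin_comb psi (B *v inner_prods psi h)"
  using lin_comb_gram_pinv_orth_proj[OF assms] by (intro orth_proj_eqI subspace_span)

lemma
  fixes psi :: "'m::finite \<Rightarrow> 'h::real_inner"
  shows orth_proj_span_in: "orth_proj (span (range psi)) h \<in> span (range psi)"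
    and orth_proj_span_orthogonal:
      "s \<in> span (range psi) \<Longrightarrow> inner (h - orth_proj (span (range psi)) h) s = 0"
  using lin_comb_gram_pinv_orth_proj[OF is_mp_pinv_mp_pinv_symmetric[OF transpose_gram]]
  by (simp_all add: orth_proj_span_gram[OF is_mp_pinv_mp_pinv_symmetric[OF transpose_gram]])

context
  fixes S :: "'h::real_inner set"
  assumes orth_proj_in: "\<And>h. orth_proj S h \<in> S"
    and orth_proj_orthogonal: "\<And>h s. s \<in> S \<Longrightarrow> inner (h - orth_proj S h) s = 0"
begin

lemma inner_orth_proj_orthogonal: "inner (f - orth_proj S f) (orth_proj S g) = 0"
  by (rule orth_proj_orthogonal[OF orth_proj_in])

lemma inner_orth_proj_commute: "inner (orth_proj S f) g = inner f (orth_proj S g)"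
proof -
  have "inner (orth_proj S f) (g - orth_proj S g) = 0"
    using inner_orth_proj_orthogonal[of g f] by (simp add: inner_commute)
  then show ?thesis
    using inner_orth_proj_orthogonal[of f g] by (simp add: inner_diff_left inner_diff_right)
qed

lemma norm_orth_proj_le: "norm (orth_proj S f) \<le> norm f"
proof -
  have "inner f f = inner (orth_proj S f) (orth_proj S f) + inner (f - orth_proj S f) (f - orth_proj S f)"
    using inner_orth_proj_orthogonal[of f f]
    by (simp add: inner_diff_left inner_diff_right inner_commute)
  then have "(norm (orth_proj S f))\<^sup>2 \<le> (norm f)\<^sup>2" by (simp add: power2_norm_eq_inner)
  then show ?thesis by (simp add: power2_le_iff_abs_le)
qed

lemma emp_risk_orth_proj_le:
  fixes phi :: "'a \<Rightarrow> 'h" and x :: "'n::finite \<Rightarrow> 'a"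
  assumes lam: "lam > 0"
  shows "emp_risk lam phi x Y (orth_proj S f)
    \<le> (2 / (real CARD('n) * lam) * (\<Sum>i\<in>UNIV. (norm (phi (x i) - orth_proj S (phi (x i))))\<^sup>2) + 2)
       * emp_risk lam phi x Y f"
proof -
  define n where "n = real CARD('n)"
  define e where "e i = phi (x i) - orth_proj S (phi (x i))" for i
  define r where "r i = inner f (phi (x i)) - Y i" for i
  define R where "R = (\<Sum>i\<in>UNIV. (r i)\<^sup>2)"
  define T where "T = (\<Sum>i\<in>UNIV. (norm (e i))\<^sup>2)"
  define F where "F = (norm f)\<^sup>2"
  have n: "n > 0" unfolding n_def by simp
  have R: "R \<ge> 0" and T: "T \<ge> 0" and F: "F \<ge> 0" unfolding R_def T_def F_def by (simp_all add: sum_nonneg)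
  have "(inner (orth_proj S f) (phi (x i)) - Y i)\<^sup>2 \<le> 2 * (r i)\<^sup>2 + 2 * F * (norm (e i))\<^sup>2" for i
  proof -
    have "inner (orth_proj S f) (phi (x i)) - Y i = r i - inner f (e i)"
      by (simp add: r_def e_def inner_diff_right inner_orth_proj_commute)
    moreover have "(r i - inner f (e i))\<^sup>2 \<le> 2 * (r i)\<^sup>2 + 2 * (inner f (e i))\<^sup>2"
      using zero_le_power2[of "r i + inner f (e i)"] by (simp add: power2_eq_square algebra_simps)
    moreover have "(inner f (e i))\<^sup>2 \<le> F * (norm (e i))\<^sup>2"
      using Cauchy_Schwarz_ineq[of f "e i"] by (simp add: F_def power2_norm_eq_inner)
    ultimately show ?thesis by simp
  qed
  then have "(\<Sum>i\<in>UNIV. (inner (orth_proj S f) (phi (x i)) - Y i)\<^sup>2)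
      \<le> (\<Sum>i\<in>UNIV. 2 * (r i)\<^sup>2 + 2 * F * (norm (e i))\<^sup>2)"
    by (rule sum_mono)
  also have "\<dots> = 2 * R + 2 * F * T"
    by (simp add: R_def T_def sum.distrib sum_distrib_left mult.assoc)
  finally have "1 / n * (\<Sum>i\<in>UNIV. (inner (orth_proj S f) (phi (x i)) - Y i)\<^sup>2)
      \<le> 1 / n * (2 * R + 2 * F * T)"
    using n by (intro mult_left_mono) auto
  moreover have "lam * (norm (orth_proj S f))\<^sup>2 \<le> lam * F"
    unfolding F_def using lam by (intro mult_left_mono power_mono norm_orth_proj_le) auto
  ultimately have "emp_risk lam phi x Y (orth_proj S f) \<le> (2 * R + 2 * F * T) / n + lam * F"
    unfolding emp_risk_def n_def[symmetric] by simp
  also have "\<dots> \<le> (2 / (n * lam) * T + 2) * (R / n + lam * F)"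
  proof -
    have "(2 / (n * lam) * T + 2) * (R / n + lam * F)
        = (2 * R + 2 * F * T) / n + lam * F + (2 * T * R / (n * n * lam) + lam * F)"
      using n lam by (simp add: field_simps)
    moreover have "0 \<le> 2 * T * R / (n * n * lam) + lam * F" using n lam R T F by simp
    ultimately show ?thesis by linarith
  qed
  finally show ?thesis
    by (simp add: emp_risk_def R_def r_def T_def e_def F_def n_def)
qed

end

section \<open>The Nystrom trace and the expected risk\<close>

lemma diag_matrix_mult_transpose:
  fixes A :: "real^'m^'n" and B :: "real^'m^'m"
  shows "(A ** B ** transpose A) $ i $ i = inner (A $ i) (B *v (A $ i))"
proof -
  have "(A ** B ** transpose A) $ i $ i = (\<Sum>l\<in>UNIV. \<Sum>j\<in>UNIV. A$i$j * B$j$l * A$i$l)"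
    by (simp add: matrix_matrix_mult_def transpose_def sum_distrib_right)
  also have "\<dots> = (\<Sum>j\<in>UNIV. \<Sum>l\<in>UNIV. A$i$j * B$j$l * A$i$l)" by (rule sum.swap)
  also have "\<dots> = inner (A $ i) (B *v (A $ i))"
    by (simp add: inner_vec_def matrix_vector_mult_def sum_distrib_left mult.assoc)
  finally show ?thesis .
qed

lemma mat_trace_kmat_nn_minus_kmat_tilde:
  fixes phi :: "'a \<Rightarrow> 'h::real_inner" and x :: "'n::finite \<Rightarrow> 'a" and z :: "'m::finite \<Rightarrow> 'a"
  assumes kernel: "\<And>u v. k u v = inner (phi u) (phi v)"
  shows "mat_trace (kmat_nn k x - kmat_tilde k x z)
    = (\<Sum>i\<in>UNIV. (norm (phi (x i) - orth_proj (span (phi ` range z)) (phi (x i))))\<^sup>2)"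
proof -
  define psi where "psi j = phi (z j)" for j
  define P where "P = orth_proj (span (range psi))"
  have S: "span (phi ` range z) = span (range psi)" by (simp add: psi_def image_image)
  have gram: "kmat_nn k z = gram psi"
    by (simp add: kmat_nn_def gram_def kernel psi_def)
  have rows: "kmat_nm k x z $ i = inner_prods psi (phi (x i))" for i
    by (simp add: vec_eq_iff kmat_nm_def inner_prods_def kernel psi_def inner_commute)
  have tilde: "kmat_tilde k x z $ i $ i = inner (phi (x i)) (P (phi (x i)))" for i
    unfolding kmat_tilde_def diag_matrix_mult_transpose rows gram P_def
      orth_proj_span_gram[OF is_mp_pinv_mp_pinv_symmetric[OF transpose_gram]]
    by (metis inner_commute inner_lin_comb)
  have "inner (h - P h) (P h) = 0" for h
    unfolding P_def by (intro orth_proj_span_orthogonal orth_proj_span_in)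
  then have "(norm (phi (x i) - P (phi (x i))))\<^sup>2 = k (x i) (x i) - inner (phi (x i)) (P (phi (x i)))"
    for i
    by (simp add: P_def power2_norm_eq_inner kernel inner_diff_left inner_diff_right inner_commute)
  then show ?thesis
    unfolding mat_trace_def S by (simp add: tilde kmat_nn_def P_def)
qed

lemma integrable_emp_risk_noisy_labels:
  fixes eps :: "'n::finite \<Rightarrow> 'w \<Rightarrow> real"
  assumes "prob_space M" and "\<And>i. eps i \<in> borel_measurable M"
    and "\<And>i. integrable M (\<lambda>w. (eps i w)\<^sup>2)"
  shows "integrable M (\<lambda>w. emp_risk lam phi x (\<lambda>i. g i + eps i w) h)"
proof -
  interpret prob_space M by fact
  have "integrable M (eps i)" for i using assms(2,3) by (rule square_integrable_imp_integrable)
  then show ?thesis using assms(3)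
    by (simp add: emp_risk_def power2_diff power2_sum algebra_simps)
qed

theorem mainTheorem3:
  fixes k :: "'a \<Rightarrow> 'a \<Rightarrow> real"
    and phi :: "'a \<Rightarrow> 'h::{real_inner, complete_space}"
    and x :: "'n::finite \<Rightarrow> 'a"
    and z :: "'m::finite \<Rightarrow> 'a"
    and fstar :: "'a \<Rightarrow> real"
    and M :: "'w measure"
    and eps :: "'n \<Rightarrow> 'w \<Rightarrow> real"
    and sigma lam :: real
    and flam :: 'h
  assumes kernel: "\<And>u v. k u v = inner (phi u) (phi v)"
    and rkhs_dense: "closure (span (range phi)) = UNIV"
    and prob: "prob_space M"
    and indep: "prob_space.indep_vars M (\<lambda>_. borel) eps UNIV"
    and ident: "\<And>i j. distr M borel (eps i) = distr M borel (eps j)"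
    and sq_int: "\<And>i. integrable M (\<lambda>w. (eps i w)\<^sup>2)"
    and mean0: "\<And>i. integral\<^sup>L M (eps i) = 0"
    and var: "\<And>i. integral\<^sup>L M (\<lambda>w. (eps i w)\<^sup>2) = sigma\<^sup>2"
    and lam_pos: "lam > 0"
    and flam_min: "\<And>h. emp_risk lam phi x (\<lambda>i. fstar (x i)) flam
                        \<le> emp_risk lam phi x (\<lambda>i. fstar (x i)) h"
  shows "integral\<^sup>L M (\<lambda>w. emp_risk lam phi x (\<lambda>i. fstar (x i) + eps i w)
            (orth_proj (span (phi ` range z)) flam))
         \<le> 2 / (real CARD('n) * lam) * mat_trace (kmat_nn k x - kmat_tilde k x z)
              * integral\<^sup>L M (\<lambda>w. emp_risk lam phi x (\<lambda>i. fstar (x i) + eps i w) flam)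
           + 2 * integral\<^sup>L M (\<lambda>w. emp_risk lam phi x (\<lambda>i. fstar (x i) + eps i w) flam)"
proof -
  interpret prob_space M by (rule prob)
  have meas: "\<And>i. eps i \<in> borel_measurable M" using indep unfolding indep_vars_def2 by auto
  define S where "S = span (phi ` range z)"
  have S: "S = span (range (\<lambda>j. phi (z j)))" by (simp add: S_def image_image)
  define c where "c = 2 / (real CARD('n) * lam) * mat_trace (kmat_nn k x - kmat_tilde k x z)"
  let ?E = "\<lambda>h w. emp_risk lam phi x (\<lambda>i. fstar (x i) + eps i w) h"
  have "?E (orth_proj S flam) w \<le> (c + 2) * ?E flam w" for w
    using emp_risk_orth_proj_le[OF orth_proj_span_in orth_proj_span_orthogonal lam_pos]
    unfolding c_def S mat_trace_kmat_nn_minus_kmat_tilde[OF kernel] image_image .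
  then have "integral\<^sup>L M (?E (orth_proj S flam)) \<le> integral\<^sup>L M (\<lambda>w. (c + 2) * ?E flam w)"
    by (intro integral_mono integrable_emp_risk_noisy_labels[OF prob meas sq_int]
        integrable_mult_right)
  also have "\<dots> = (c + 2) * integral\<^sup>L M (?E flam)" by (rule integral_mult_right_zero)
  finally show ?thesis by (simp add: S_def c_def distrib_right)
qed

end
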